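(* Let $G$ be a finite simple graph with $n$ vertices, $m$ edges, and degree sequence $d(1),\dots,d(n)$. Then \[ \left(6k_3(G)-\sum_{i=1}^n d^2(i)+nm\right)\, bk(G)\;\ge\; n\,k_3(G)+8k_4(G)+2k_4^{(3)}(G). \]
   Context: A book of size $q$ is a set of $q$ triangles sharing a common edge; the booksize $bk(G)$ is the size of the largest book in $G$, i.e. the maximum over edges $uv$ of the number of common neighbours of $u$ and $v$. $k_s(G)$ denotes the number of $s$-cliques of $G$ (so $k_3(G)$ is the number of triangles and $k_4(G)$ the number of copies of $K_4$). $k_4^{(3)}(G)$ denotes the number of 4-vertex subsets of $V(G)$ inducing a subgraph isomorphic to a triangle together with an isolated vertex. *)

theory Defs
  imports Main
begin

definition simple_graph :: "'a set \<Rightarrow> 'a set set \<Rightarrow> bool" where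
  "simple_graph V E \<longleftrightarrow> finite V \<and> (\<forall>e\<in>E. e \<subseteq> V \<and> card e = 2)"

definition neighbours :: "'a set set \<Rightarrow> 'a \<Rightarrow> 'a set" where
  "neighbours E v = {u. {u, v} \<in> E}"

definition degree :: "'a set set \<Rightarrow> 'a \<Rightarrow> nat" where
  "degree E v = card (neighbours E v)"

definition cliques :: "'a set \<Rightarrow> 'a set set \<Rightarrow> nat \<Rightarrow> 'a set set" where
  "cliques V E s = {S. S \<subseteq> V \<and> card S = s \<and> (\<forall>u\<in>S. \<forall>v\<in>S. u \<noteq> v \<longrightarrow> {u, v} \<in> E)}"

definition k_s :: "'a set \<Rightarrow> 'a set set \<Rightarrow> nat \<Rightarrow> nat" where
  "k_s V E s = card (cliques V E s)"

definition booksize :: "'a set \<Rightarrow> 'a set set \<Rightarrow> nat" where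
  "booksize V E = Max (insert 0 {card (neighbours E u \<inter> neighbours E v) | u v. {u, v} \<in> E})"

definition k4_3 :: "'a set \<Rightarrow> 'a set set \<Rightarrow> nat" where
  "k4_3 V E = card {S. S \<subseteq> V \<and> card S = 4 \<and>
      (\<exists>T w. S = insert w T \<and> w \<notin> T \<and> T \<in> cliques V E 3 \<and>
             (\<forall>t\<in>T. {w, t} \<notin> E))}"

end

theory Submission
  imports Defs "HOL-Combinatorics.Multiset_Permutations"
begin

text \<open>
  For vertices u, v let A(u, v) be the number of vertices adjacent to both or to neither
  of them. Then A(u, v) = n - d(u) - d(v) + 2 |N(u) \<inter> N(v)|, so summing A over the
  ordered edges gives twice the first factor F of the inequality. The sum S of A(u, v) over
  ordered triangles (u, v, w) is the sum of A(u, v) |N(u) \<inter> N(v)| over ordered edges,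
  hence S \<le> 2 F bk(G). On the other hand S does not change if A(u, v) is replaced by
  A(v, w) or A(u, w), and a vertex agrees on all three pairs of a triangle if it is adjacent
  to all or none of its vertices, and on exactly one pair otherwise. Counting every k-set
  through its k! orderings, this gives 3 S = 6 n k3 + 48 k4 + 12 k4^(3).
\<close>

lemma sum_lists_length_Suc:
  assumes "finite A"
  shows "(\<Sum>xs | set xs \<subseteq> A \<and> length xs = Suc n. f xs)
       = (\<Sum>x\<in>A. \<Sum>xs | set xs \<subseteq> A \<and> length xs = n. f (x # xs))"
proof -
  have "(\<Sum>xs | set xs \<subseteq> A \<and> length xs = Suc n. f xs)
      = (\<Sum>(xs, x) \<in> {xs. set xs \<subseteq> A \<and> length xs = n} \<times> A. f (x # xs))"
    unfolding lists_length_Suc_eq by (subst sum.reindex) (auto simp: inj_on_def intro!: sum.cong)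
  also have "\<dots> = (\<Sum>x\<in>A. \<Sum>xs | set xs \<subseteq> A \<and> length xs = n. f (x # xs))"
    by (subst sum.swap) (simp add: sum.cartesian_product)
  finally show ?thesis .
qed

lemma sum_lists_by_set:
  fixes h :: "'a set \<Rightarrow> 'b::comm_semiring_1"
  assumes "finite A" and "C \<subseteq> {S. S \<subseteq> A \<and> card S = k}"
  shows "(\<Sum>xs | set xs \<subseteq> A \<and> length xs = k. of_bool (set xs \<in> C) * h (set xs))
       = of_nat (fact k) * (\<Sum>S\<in>C. h S)"
proof -
  let ?L = "{xs. set xs \<subseteq> A \<and> length xs = k}"
  let ?M = "{xs \<in> ?L. set xs \<in> C}"
  have "finite C"
    by (rule finite_subset[of _ "Pow A"]) (use assms in auto)
  have "finite ?M"
    by (rule finite_subset[OF _ finite_lists_length_eq[OF assms(1), of k]]) auto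
  have fibre: "(\<Sum>xs \<in> {xs \<in> ?M. set xs = S}. h (set xs)) = of_nat (fact k) * h S"
    if "S \<in> C" for S
  proof -
    have "finite S" "card S = k"
      using that assms finite_subset by blast+
    moreover have "{xs \<in> ?M. set xs = S} = permutations_of_set S"
      using that assms(2) by (auto simp: permutations_of_set_def distinct_card card_distinct)
    ultimately show ?thesis
      by (simp add: permutations_of_setD cong: sum.cong)
  qed
  have "(\<Sum>xs\<in>?L. of_bool (set xs \<in> C) * h (set xs))
      = (\<Sum>xs\<in>?L. if set xs \<in> C then h (set xs) else 0)"
    by (intro sum.cong) auto
  also have "\<dots> = (\<Sum>xs\<in>?M. h (set xs))"
    by (rule sum.inter_filter[symmetric]) (simp add: assms(1) finite_lists_length_eq)
  also have "\<dots> = (\<Sum>S\<in>C. \<Sum>xs \<in> {xs \<in> ?M. set xs = S}. h (set xs))"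
    by (rule sum.group[symmetric]) (use \<open>finite ?M\<close> \<open>finite C\<close> in auto)
  also have "\<dots> = (\<Sum>S\<in>C. of_nat (fact k) * h S)"
    by (rule sum.cong[OF refl fibre])
  finally show ?thesis
    by (simp add: sum_distrib_left)
qed

lemma sum_pairs_by_set:
  fixes h :: "'a set \<Rightarrow> 'b::comm_semiring_1"
  assumes "finite A" and "C \<subseteq> {S. S \<subseteq> A \<and> card S = 2}"
  shows "(\<Sum>u\<in>A. \<Sum>v\<in>A. of_bool ({u, v} \<in> C) * h {u, v}) = 2 * (\<Sum>S\<in>C. h S)"
  using sum_lists_by_set[OF assms] assms(1) by (simp add: numeral_eq_Suc sum_lists_length_Suc Collect_conv_if)

lemma sum_triples_by_set:
  fixes h :: "'a set \<Rightarrow> 'b::comm_semiring_1"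
  assumes "finite A" and "C \<subseteq> {S. S \<subseteq> A \<and> card S = 3}"
  shows "(\<Sum>u\<in>A. \<Sum>v\<in>A. \<Sum>w\<in>A. of_bool ({u, v, w} \<in> C) * h {u, v, w}) = 6 * (\<Sum>S\<in>C. h S)"
  using sum_lists_by_set[OF assms] assms(1) by (simp add: numeral_eq_Suc sum_lists_length_Suc Collect_conv_if)

lemma sum_quadruples_by_set:
  fixes h :: "'a set \<Rightarrow> 'b::comm_semiring_1"
  assumes "finite A" and "C \<subseteq> {S. S \<subseteq> A \<and> card S = 4}"
  shows "(\<Sum>u\<in>A. \<Sum>v\<in>A. \<Sum>w\<in>A. \<Sum>x\<in>A. of_bool ({u, v, w, x} \<in> C) * h {u, v, w, x})
       = 24 * (\<Sum>S\<in>C. h S)"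
  using sum_lists_by_set[OF assms] assms(1) by (simp add: numeral_eq_Suc sum_lists_length_Suc Collect_conv_if)

lemma sum_rotate3:
  "(\<Sum>u\<in>A. \<Sum>v\<in>A. \<Sum>w\<in>A. f u v w) = (\<Sum>u\<in>A. \<Sum>v\<in>A. \<Sum>w\<in>A. f w u v)"
  by (subst sum.swap) (rule sum.cong[OF refl], rule sum.swap)

lemma sum_swap23:
  "(\<Sum>u\<in>A. \<Sum>v\<in>A. \<Sum>w\<in>A. f u v w) = (\<Sum>u\<in>A. \<Sum>v\<in>A. \<Sum>w\<in>A. f u w v)"
  by (rule sum.cong[OF refl], rule sum.swap)

lemma of_bool_pairwise_eq_three:
  "of_bool (p = q) + of_bool (q = r) + of_bool (p = r)
   = (1 :: 'a::comm_ring_1) + 2 * (of_bool p * of_bool q * of_bool r)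
     + 2 * ((1 - of_bool p) * (1 - of_bool q) * (1 - of_bool r))"
  by (cases p; cases q; cases r) simp_all

locale finite_simple_graph =
  fixes V :: "'a set" and E :: "'a set set"
  assumes simple_graph: "simple_graph V E"
begin

definition adj :: "'a \<Rightarrow> 'a \<Rightarrow> int" where
  "adj u v = of_bool ({u, v} \<in> E)"

lemma finite_vertices: "finite V"
  using simple_graph by (simp add: simple_graph_def)

lemma edges_subset: "E \<subseteq> {S. S \<subseteq> V \<and> card S = 2}"
  using simple_graph by (auto simp: simple_graph_def)

lemma edge_vertices:
  assumes "{u, v} \<in> E"
  shows "u \<in> V" "v \<in> V" "u \<noteq> v"
  using edges_subset assms by (auto simp: card_insert_if split: if_splits)

lemma no_loops: "{u, u} \<notin> E"
  using edge_vertices by blast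

lemma adj_sym: "adj u v = adj v u"
  by (simp add: adj_def insert_commute)

lemma neighbours_eq: "neighbours E v = {x \<in> V. {x, v} \<in> E}"
  using edge_vertices by (auto simp: neighbours_def)

lemma degree_eq_sum_adj: "int (degree E v) = (\<Sum>x\<in>V. adj x v)"
  using finite_vertices by (simp add: degree_def neighbours_eq adj_def Int_def)

lemma card_common_neighbours_eq_sum_adj:
  "int (card (neighbours E u \<inter> neighbours E v)) = (\<Sum>x\<in>V. adj x u * adj x v)"
proof -
  have "neighbours E u \<inter> neighbours E v = V \<inter> {x. {x, u} \<in> E \<and> {x, v} \<in> E}"
    by (auto simp: neighbours_eq)
  then show ?thesis
    using finite_vertices by (simp add: adj_def flip: of_bool_conj)
qed

lemma card_common_neighbours_le_booksize:
  assumes "{u, v} \<in> E"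
  shows "card (neighbours E u \<inter> neighbours E v) \<le> booksize V E"
proof -
  let ?B = "{card (neighbours E u \<inter> neighbours E v) | u v. {u, v} \<in> E}"
  have "?B \<subseteq> {..card V}"
  proof
    fix k assume "k \<in> ?B"
    then obtain p q where "k = card (neighbours E p \<inter> neighbours E q)" by blast
    moreover have "neighbours E p \<inter> neighbours E q \<subseteq> V" by (auto simp: neighbours_eq)
    ultimately show "k \<in> {..card V}" using finite_vertices card_mono by auto
  qed
  then have "finite (insert 0 ?B)"
    using finite_subset[of ?B "{..card V}"] by simp
  moreover have "card (neighbours E u \<inter> neighbours E v) \<in> insert 0 ?B"
    using assms by blast
  ultimately show ?thesis
    unfolding booksize_def by (rule Max_ge)
qed

lemma sum_adj_eq_twice_card_edges: "(\<Sum>u\<in>V. \<Sum>v\<in>V. adj u v) = 2 * int (card E)"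
  using sum_pairs_by_set[OF finite_vertices edges_subset, of "\<lambda>_. 1 :: int"]
  by (simp add: adj_def)

lemma finite_cliques: "finite (cliques V E k)"
  by (rule finite_subset[of _ "Pow V"]) (use finite_vertices in \<open>auto simp: cliques_def\<close>)

lemma cliques_subset: "cliques V E k \<subseteq> {S. S \<subseteq> V \<and> card S = k}"
  by (auto simp: cliques_def)

lemma clique_iff_sorted_wrt:
  "set xs \<subseteq> V \<Longrightarrow>
    set xs \<in> cliques V E (length xs) \<longleftrightarrow> sorted_wrt (\<lambda>u v. {u, v} \<in> E) xs"
proof (induction xs)
  case Nil
  then show ?case by (simp add: cliques_def)
next
  case (Cons x xs)
  have "set (x # xs) \<in> cliques V E (length (x # xs))
        \<longleftrightarrow> (\<forall>y\<in>set xs. {x, y} \<in> E) \<and> set xs \<in> cliques V E (length xs)"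
  proof
    assume clique: "set (x # xs) \<in> cliques V E (length (x # xs))"
    then have "x \<notin> set xs" "card (set xs) = length xs"
      using card_length[of xs] by (auto simp: cliques_def card_insert_if split: if_splits)
    then show "(\<forall>y\<in>set xs. {x, y} \<in> E) \<and> set xs \<in> cliques V E (length xs)"
      using clique by (auto simp: cliques_def)
  next
    assume adjacent: "(\<forall>y\<in>set xs. {x, y} \<in> E) \<and> set xs \<in> cliques V E (length xs)"
    then have "x \<notin> set xs" using no_loops by blast
    then show "set (x # xs) \<in> cliques V E (length (x # xs))"
      using adjacent Cons.prems by (auto simp: cliques_def insert_commute)
  qed
  then show ?case using Cons by simp
qed

lemma triangle_indicator:
  assumes "u \<in> V" "v \<in> V" "w \<in> V"
  shows "of_bool ({u, v, w} \<in> cliques V E 3) = adj u v * adj u w * adj v w"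
  using clique_iff_sorted_wrt[of "[u, v, w]"] assms by (simp add: adj_def numeral_3_eq_3)

lemma K4_indicator:
  assumes "u \<in> V" "v \<in> V" "w \<in> V" "x \<in> V"
  shows "of_bool ({u, v, w, x} \<in> cliques V E 4)
       = adj u v * adj u w * adj u x * adj v w * adj v x * adj w x"
  using clique_iff_sorted_wrt[of "[u, v, w, x]"] assms by (simp add: adj_def numeral_eq_Suc)

lemma sum_ordered_triangles:
  fixes h :: "'a set \<Rightarrow> int"
  shows "(\<Sum>u\<in>V. \<Sum>v\<in>V. \<Sum>w\<in>V. adj u v * adj u w * adj v w * h {u, v, w})
       = 6 * (\<Sum>T\<in>cliques V E 3. h T)"
proof -
  have "(\<Sum>u\<in>V. \<Sum>v\<in>V. \<Sum>w\<in>V. adj u v * adj u w * adj v w * h {u, v, w})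
      = (\<Sum>u\<in>V. \<Sum>v\<in>V. \<Sum>w\<in>V. of_bool ({u, v, w} \<in> cliques V E 3) * h {u, v, w})"
    by (intro sum.cong refl) (simp add: triangle_indicator)
  also have "\<dots> = 6 * (\<Sum>T\<in>cliques V E 3. h T)"
    by (rule sum_triples_by_set[OF finite_vertices cliques_subset])
  finally show ?thesis .
qed

lemma sum_ordered_K4:
  "(\<Sum>u\<in>V. \<Sum>v\<in>V. \<Sum>w\<in>V. \<Sum>x\<in>V. adj u v * adj u w * adj u x * adj v w * adj v x * adj w x)
   = 24 * int (k_s V E 4)"
proof -
  have "(\<Sum>u\<in>V. \<Sum>v\<in>V. \<Sum>w\<in>V. \<Sum>x\<in>V. adj u v * adj u w * adj u x * adj v w * adj v x * adj w x)
      = (\<Sum>u\<in>V. \<Sum>v\<in>V. \<Sum>w\<in>V. \<Sum>x\<in>V. of_bool ({u, v, w, x} \<in> cliques V E 4) * 1)"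
    by (intro sum.cong refl) (simp add: K4_indicator)
  also have "\<dots> = 24 * (\<Sum>T\<in>cliques V E 4. 1)"
    by (rule sum_quadruples_by_set[OF finite_vertices cliques_subset])
  finally show ?thesis by (simp add: k_s_def)
qed

definition nonneighbours :: "'a set \<Rightarrow> 'a set" where
  "nonneighbours T = {x \<in> V. \<forall>t\<in>T. {x, t} \<notin> E}"

lemma clique_has_other_vertex:
  assumes "T \<in> cliques V E k" "2 \<le> k"
  obtains t where "t \<in> T" "t \<noteq> x"
proof -
  have "\<not> T \<subseteq> {x}"
    using assms card_mono[of "{x}" T] by (auto simp: cliques_def)
  then show ?thesis using that by blast
qed

lemma nonneighbour_notin_clique:
  assumes "T \<in> cliques V E k" "2 \<le> k" "w \<in> nonneighbours T"
  shows "w \<notin> T"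
proof
  assume "w \<in> T"
  obtain t where "t \<in> T" "t \<noteq> w" using clique_has_other_vertex assms(1,2) .
  then have "{w, t} \<in> E" using assms(1) \<open>w \<in> T\<close> by (auto simp: cliques_def)
  then show False using assms(3) \<open>t \<in> T\<close> by (auto simp: nonneighbours_def)
qed

lemma inj_on_insert_nonneighbour:
  assumes "2 \<le> k"
  shows "inj_on (\<lambda>(T, w). insert w T) (SIGMA T:cliques V E k. nonneighbours T)"
proof (rule inj_onI, clarsimp)
  fix T w T' w'
  assume T: "T \<in> cliques V E k" "w \<in> nonneighbours T"
    and T': "T' \<in> cliques V E k" "w' \<in> nonneighbours T'"
    and eq: "insert w T = insert w' T'"
  have "w \<notin> T" "w' \<notin> T'" using nonneighbour_notin_clique T T' assms by auto
  show "T = T' \<and> w = w'"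
  proof (cases "w = w'")
    case True
    then show ?thesis using eq \<open>w \<notin> T\<close> \<open>w' \<notin> T'\<close> by (metis Diff_insert_absorb)
  next
    case False
    then have "w \<in> T'" using eq by blast
    obtain t where "t \<in> T'" "t \<noteq> w" using clique_has_other_vertex T'(1) assms .
    then have "{w, t} \<in> E" "t \<in> T"
      using T'(1) \<open>w \<in> T'\<close> eq by (auto simp: cliques_def)
    then show ?thesis using T(2) by (auto simp: nonneighbours_def)
  qed
qed

lemma image_insert_nonneighbour:
  "(\<lambda>(T, w). insert w T) ` (SIGMA T:cliques V E 3. nonneighbours T)
   = {S. S \<subseteq> V \<and> card S = 4 \<and>
        (\<exists>T w. S = insert w T \<and> w \<notin> T \<and> T \<in> cliques V E 3 \<and> (\<forall>t\<in>T. {w, t} \<notin> E))}"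
  (is "?f ` ?D = ?K")
proof (intro equalityI subsetI)
  fix S assume "S \<in> ?f ` ?D"
  then obtain T w where T: "T \<in> cliques V E 3" "w \<in> nonneighbours T" and S: "S = insert w T"
    by auto
  moreover have "w \<notin> T"
    using nonneighbour_notin_clique T by simp
  moreover have "finite T"
    using T(1) rev_finite_subset[OF finite_vertices] by (auto simp: cliques_def)
  ultimately show "S \<in> ?K"
    by (auto simp: cliques_def nonneighbours_def insert_commute intro!: exI[of _ T] exI[of _ w])
next
  fix S assume "S \<in> ?K"
  then obtain T w where "S \<subseteq> V" "S = insert w T" "T \<in> cliques V E 3" "\<forall>t\<in>T. {w, t} \<notin> E"
    by blast
  then show "S \<in> ?f ` ?D"
    by (auto simp: nonneighbours_def image_iff intro!: bexI[of _ "(T, w)"])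
qed

lemma sum_card_nonneighbours_triangles: "(\<Sum>T\<in>cliques V E 3. card (nonneighbours T)) = k4_3 V E"
proof -
  have "(\<Sum>T\<in>cliques V E 3. card (nonneighbours T)) = card (SIGMA T:cliques V E 3. nonneighbours T)"
    using finite_cliques finite_vertices by (simp add: card_SigmaI nonneighbours_def)
  also have "\<dots> = card ((\<lambda>(T, w). insert w T) ` (SIGMA T:cliques V E 3. nonneighbours T))"
    by (rule card_image[symmetric], rule inj_on_insert_nonneighbour) simp
  finally show ?thesis by (simp add: image_insert_nonneighbour k4_3_def)
qed

definition agreements :: "'a \<Rightarrow> 'a \<Rightarrow> nat" where
  "agreements u v = card {x \<in> V. ({x, u} \<in> E) = ({x, v} \<in> E)}"

lemma agreements_eq:
  "int (agreements u v) = int (card V) - int (degree E u) - int (degree E v)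
     + 2 * int (card (neighbours E u \<inter> neighbours E v))"
proof -
  have "int (agreements u v) = (\<Sum>x\<in>V. of_bool (({x, u} \<in> E) = ({x, v} \<in> E)))"
    using finite_vertices by (simp add: agreements_def Int_def)
  also have "\<dots> = (\<Sum>x\<in>V. 1 - adj x u - adj x v + 2 * (adj x u * adj x v))"
    by (rule sum.cong) (auto simp: adj_def)
  finally show ?thesis
    by (simp add: degree_eq_sum_adj card_common_neighbours_eq_sum_adj
        sum.distrib sum_subtractf sum_distrib_left)
qed

lemma sum_nonadjacent_eq_card_nonneighbours:
  "(\<Sum>x\<in>V. (1 - adj x u) * (1 - adj x v) * (1 - adj x w)) = int (card (nonneighbours {u, v, w}))"
proof -
  have "(\<Sum>x\<in>V. (1 - adj x u) * (1 - adj x v) * (1 - adj x w))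
      = (\<Sum>x\<in>V. of_bool ({x, u} \<notin> E \<and> {x, v} \<notin> E \<and> {x, w} \<notin> E))"
    by (rule sum.cong) (auto simp: adj_def)
  then show ?thesis
    using finite_vertices by (simp add: nonneighbours_def Int_def)
qed

lemma agreements_of_three:
  "int (agreements u v) + int (agreements v w) + int (agreements u w)
   = int (card V) + 2 * (\<Sum>x\<in>V. adj x u * adj x v * adj x w)
     + 2 * int (card (nonneighbours {u, v, w}))"
proof -
  have "int (agreements u v) + int (agreements v w) + int (agreements u w)
      = (\<Sum>x\<in>V. of_bool (({x, u} \<in> E) = ({x, v} \<in> E)) + of_bool (({x, v} \<in> E) = ({x, w} \<in> E))
                + of_bool (({x, u} \<in> E) = ({x, w} \<in> E)))"
    using finite_vertices by (simp add: agreements_def Int_def sum.distrib)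
  also have "\<dots> = (\<Sum>x\<in>V. 1 + 2 * (adj x u * adj x v * adj x w)
                    + 2 * ((1 - adj x u) * (1 - adj x v) * (1 - adj x w)))"
    unfolding adj_def by (rule sum.cong[OF refl], rule of_bool_pairwise_eq_three)
  finally show ?thesis
    by (simp add: sum.distrib sum_nonadjacent_eq_card_nonneighbours flip: sum_distrib_left)
qed

lemma sum_adj_times_degree_left:
  "(\<Sum>u\<in>V. \<Sum>v\<in>V. adj u v * int (degree E u)) = (\<Sum>u\<in>V. int (degree E u) ^ 2)"
  by (simp add: degree_eq_sum_adj adj_sym power2_eq_square sum_distrib_right)

lemma sum_adj_times_degree_right:
  "(\<Sum>u\<in>V. \<Sum>v\<in>V. adj u v * int (degree E v)) = (\<Sum>v\<in>V. int (degree E v) ^ 2)"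
  by (subst sum.swap) (simp add: degree_eq_sum_adj power2_eq_square sum_distrib_right)

lemma sum_adj_times_codegree:
  "(\<Sum>u\<in>V. \<Sum>v\<in>V. adj u v * int (card (neighbours E u \<inter> neighbours E v))) = 6 * int (k_s V E 3)"
proof -
  have "(\<Sum>u\<in>V. \<Sum>v\<in>V. adj u v * int (card (neighbours E u \<inter> neighbours E v)))
      = (\<Sum>u\<in>V. \<Sum>v\<in>V. \<Sum>w\<in>V. adj u v * adj u w * adj v w * 1)"
    by (simp add: card_common_neighbours_eq_sum_adj sum_distrib_left adj_sym mult.assoc)
  also have "\<dots> = 6 * int (k_s V E 3)"
    using sum_ordered_triangles[of "\<lambda>_. 1"] by (simp add: k_s_def)
  finally show ?thesis .
qed

lemma sum_edges_agreements:
  "(\<Sum>u\<in>V. \<Sum>v\<in>V. adj u v * int (agreements u v))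
   = 2 * (6 * int (k_s V E 3) - (\<Sum>v\<in>V. int (degree E v) ^ 2) + int (card V) * int (card E))"
proof -
  have "(\<Sum>u\<in>V. \<Sum>v\<in>V. adj u v * int (agreements u v))
      = int (card V) * (\<Sum>u\<in>V. \<Sum>v\<in>V. adj u v)
        - (\<Sum>u\<in>V. \<Sum>v\<in>V. adj u v * int (degree E u))
        - (\<Sum>u\<in>V. \<Sum>v\<in>V. adj u v * int (degree E v))
        + 2 * (\<Sum>u\<in>V. \<Sum>v\<in>V. adj u v * int (card (neighbours E u \<inter> neighbours E v)))"
    by (simp add: agreements_eq algebra_simps sum.distrib sum_subtractf sum_distrib_left)
  then show ?thesis
    by (simp add: sum_adj_eq_twice_card_edges sum_adj_times_degree_left
        sum_adj_times_degree_right sum_adj_times_codegree)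
qed

lemma sum_triangles_agreements_le:
  "(\<Sum>u\<in>V. \<Sum>v\<in>V. \<Sum>w\<in>V. adj u v * adj u w * adj v w * int (agreements u v))
   \<le> int (booksize V E) * (\<Sum>u\<in>V. \<Sum>v\<in>V. adj u v * int (agreements u v))"
proof -
  have "(\<Sum>u\<in>V. \<Sum>v\<in>V. \<Sum>w\<in>V. adj u v * adj u w * adj v w * int (agreements u v))
      = (\<Sum>u\<in>V. \<Sum>v\<in>V. adj u v * int (agreements u v) * int (card (neighbours E u \<inter> neighbours E v)))"
    by (simp add: card_common_neighbours_eq_sum_adj sum_distrib_left adj_sym mult_ac)
  also have "\<dots> \<le> (\<Sum>u\<in>V. \<Sum>v\<in>V. adj u v * int (agreements u v) * int (booksize V E))"
  proof (intro sum_mono)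
    fix u v
    show "adj u v * int (agreements u v) * int (card (neighbours E u \<inter> neighbours E v))
        \<le> adj u v * int (agreements u v) * int (booksize V E)"
      using card_common_neighbours_le_booksize[of u v]
      by (cases "{u, v} \<in> E") (simp_all add: adj_def mult_left_mono)
  qed
  finally show ?thesis
    by (simp add: sum_distrib_left mult_ac)
qed

lemma sum_triangles_agreements:
  "3 * (\<Sum>u\<in>V. \<Sum>v\<in>V. \<Sum>w\<in>V. adj u v * adj u w * adj v w * int (agreements u v))
   = 6 * int (card V) * int (k_s V E 3) + 48 * int (k_s V E 4) + 12 * int (k4_3 V E)"
proof -
  let ?t = "\<lambda>u v w. adj u v * adj u w * adj v w"
  have triangles: "(\<Sum>u\<in>V. \<Sum>v\<in>V. \<Sum>w\<in>V. ?t u v w) = 6 * int (k_s V E 3)"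
    using sum_ordered_triangles[of "\<lambda>_. 1"] by (simp add: k_s_def)
  have K4: "(\<Sum>u\<in>V. \<Sum>v\<in>V. \<Sum>w\<in>V. ?t u v w * (\<Sum>x\<in>V. adj x u * adj x v * adj x w))
      = 24 * int (k_s V E 4)"
    using sum_ordered_K4 by (simp add: sum_distrib_left adj_sym mult_ac)
  have isolated: "(\<Sum>u\<in>V. \<Sum>v\<in>V. \<Sum>w\<in>V. ?t u v w * int (card (nonneighbours {u, v, w})))
      = 6 * int (k4_3 V E)"
    using sum_ordered_triangles[of "\<lambda>T. int (card (nonneighbours T))"]
    by (simp add: sum_card_nonneighbours_triangles flip: of_nat_sum)
  have "(\<Sum>u\<in>V. \<Sum>v\<in>V. \<Sum>w\<in>V. ?t u v w * int (agreements v w))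
      = (\<Sum>u\<in>V. \<Sum>v\<in>V. \<Sum>w\<in>V. ?t u v w * int (agreements u v))"
    by (subst sum_rotate3) (simp add: adj_sym mult_ac)
  moreover have "(\<Sum>u\<in>V. \<Sum>v\<in>V. \<Sum>w\<in>V. ?t u v w * int (agreements u w))
      = (\<Sum>u\<in>V. \<Sum>v\<in>V. \<Sum>w\<in>V. ?t u v w * int (agreements u v))"
    by (subst sum_swap23) (simp add: adj_sym mult_ac)
  ultimately have "3 * (\<Sum>u\<in>V. \<Sum>v\<in>V. \<Sum>w\<in>V. ?t u v w * int (agreements u v))
      = (\<Sum>u\<in>V. \<Sum>v\<in>V. \<Sum>w\<in>V.
           ?t u v w * (int (agreements u v) + int (agreements v w) + int (agreements u w)))"
    by (simp add: distrib_left sum.distrib)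
  also have "\<dots> = (\<Sum>u\<in>V. \<Sum>v\<in>V. \<Sum>w\<in>V. ?t u v w * (int (card V)
      + 2 * (\<Sum>x\<in>V. adj x u * adj x v * adj x w) + 2 * int (card (nonneighbours {u, v, w}))))"
    by (simp only: agreements_of_three)
  also have "\<dots> = int (card V) * (\<Sum>u\<in>V. \<Sum>v\<in>V. \<Sum>w\<in>V. ?t u v w)
      + 2 * (\<Sum>u\<in>V. \<Sum>v\<in>V. \<Sum>w\<in>V. ?t u v w * (\<Sum>x\<in>V. adj x u * adj x v * adj x w))
      + 2 * (\<Sum>u\<in>V. \<Sum>v\<in>V. \<Sum>w\<in>V. ?t u v w * int (card (nonneighbours {u, v, w})))"
    by (simp add: distrib_left sum.distrib sum_distrib_left mult_ac)
  finally show ?thesis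
    by (simp only: triangles K4 isolated)
qed

end

theorem theorem1:
  fixes V :: "'a set" and E :: "'a set set"
  assumes "simple_graph V E"
  shows "(6 * int (k_s V E 3) - (\<Sum>v\<in>V. int (degree E v) ^ 2) + int (card V) * int (card E))
           * int (booksize V E)
         \<ge> int (card V) * int (k_s V E 3) + 8 * int (k_s V E 4) + 2 * int (k4_3 V E)"
proof -
  interpret finite_simple_graph V E
    using assms by unfold_locales
  let ?S = "\<Sum>u\<in>V. \<Sum>v\<in>V. \<Sum>w\<in>V. adj u v * adj u w * adj v w * int (agreements u v)"
  have "?S \<le> int (booksize V E) * (2 * (6 * int (k_s V E 3) - (\<Sum>v\<in>V. int (degree E v) ^ 2)
               + int (card V) * int (card E)))"
    using sum_triangles_agreements_le by (simp only: sum_edges_agreements)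
  then show ?thesis
    using sum_triangles_agreements by (simp add: algebra_simps)
qed

end
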